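(* Let $F:\mathbb{R}^d\to\mathbb{R}$ belong to $C^{1,1}(\mathbb{R}^d)$ with Lipschitz constant $L>0$ for its gradient, let $\boldsymbol{\Xi}=(\boldsymbol{\xi}_1,\ldots,\boldsymbol{\xi}_d)$ be an orthonormal basis of $\mathbb{R}^d$, let $\sigma>0$ and $M\ge 1$, and let $C>0$ be a constant such that the Gauss–Hermite quadrature error bound $$\big|\widetilde{\mathscr{D}}^M[G_\sigma(0\,|\,\boldsymbol x,\boldsymbol\xi_i)]-\mathscr{D}[G_\sigma(0\,|\,\boldsymbol x,\boldsymbol\xi_i)]\big|\le C\,\frac{M!\,\sqrt{\pi}}{2^M\,(2M)!}\,\sigma^{2M-1}$$ holds for all $i\in\{1,\ldots,d\}$ at the point $\boldsymbol x\in\mathbb{R}^d$. Then $$\big\|\widetilde{\nabla}^M_{\sigma,\boldsymbol\Xi}[F](\boldsymbol x)-\nabla F(\boldsymbol x)\big\|^2\le \frac{2C^2\pi d\,(M!)^2}{4^M((2M)!)^2}\,\sigma^{4M-2}+32\,d\,L^2\sigma^2 .$$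
   Context: $F\in C^{1,1}(\mathbb{R}^d)$ means there is $L>0$ with $\|\nabla F(\boldsymbol x+\boldsymbol\xi)-\nabla F(\boldsymbol x)\|\le L\|\boldsymbol\xi\|$ for all $\boldsymbol x,\boldsymbol\xi\in\mathbb{R}^d$; $\|\cdot\|$ is the Euclidean norm. For $\boldsymbol x\in\mathbb{R}^d$ and a unit vector $\boldsymbol\xi$, set $G(y\,|\,\boldsymbol x,\boldsymbol\xi)=F(\boldsymbol x+y\boldsymbol\xi)$ for $y\in\mathbb{R}$, and $G_\sigma(y\,|\,\boldsymbol x,\boldsymbol\xi)=\mathbb{E}_{v\sim\mathcal N(0,1)}[G(y+\sigma v\,|\,\boldsymbol x,\boldsymbol\xi)]$. Its derivative at $0$ is $\mathscr{D}[G_\sigma(0\,|\,\boldsymbol x,\boldsymbol\xi)]=\frac1\sigma\mathbb{E}_{v\sim\mathcal N(0,1)}[G(\sigma v\,|\,\boldsymbol x,\boldsymbol\xi)\,v]$. The Gauss–Hermite estimator is $\widetilde{\mathscr{D}}^M[G_\sigma(0\,|\,\boldsymbol x,\boldsymbol\xi)]=\frac{1}{\sqrt\pi\,\sigma}\sum_{m=1}^M w_m F(\boldsymbol x+\sqrt2\sigma v_m\boldsymbol\xi)\sqrt2 v_m$, where $v_1,\ldots,v_M$ are the roots of the $M$-th Hermite polynomial $H_M$ (physicists' convention, weight $e^{-v^2}$) and $w_m$ the corresponding Gauss–Hermite quadrature weights. The DGS estimator is $\widetilde{\nabla}^M_{\sigma,\boldsymbol\Xi}[F](\boldsymbol x)=\sum_{i=1}^d\widetilde{\mathscr{D}}^M[G_\sigma(0\,|\,\boldsymbol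 x,\boldsymbol\xi_i)]\,\boldsymbol\xi_i$. *)

theory Defs
  imports "HOL-Analysis.Analysis" "HOL-Probability.Distributions"
begin

fun hermite :: "nat \<Rightarrow> real \<Rightarrow> real" where
  "hermite 0 v = 1"
| "hermite (Suc 0) v = 2 * v"
| "hermite (Suc (Suc n)) v = 2 * v * hermite (Suc n) v - 2 * real (Suc n) * hermite n v"

definition gh_nodes :: "nat \<Rightarrow> real set" where
  "gh_nodes M = {v. hermite M v = 0}"

text \<open>Gauss--Hermite weight at node v (weight function exp(-v^2)).\<close>
definition gh_weight :: "nat \<Rightarrow> real \<Rightarrow> real" where
  "gh_weight M v = (2 ^ (M - 1) * fact M * sqrt pi) / ((real M)\<^sup>2 * (hermite (M - 1) v)\<^sup>2)"

text \<open>Exact derivative of the Gaussian-smoothed directional function at 0.\<close>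
definition gs_deriv :: "real \<Rightarrow> ('a::euclidean_space \<Rightarrow> real) \<Rightarrow> 'a \<Rightarrow> 'a \<Rightarrow> real" where
  "gs_deriv \<sigma> F x \<xi> = (1 / \<sigma>) * (LINT v|lborel. std_normal_density v * (F (x + (\<sigma> * v) *\<^sub>R \<xi>) * v))"

definition gh_deriv_est :: "nat \<Rightarrow> real \<Rightarrow> ('a::euclidean_space \<Rightarrow> real) \<Rightarrow> 'a \<Rightarrow> 'a \<Rightarrow> real" where
  "gh_deriv_est M \<sigma> F x \<xi> = (1 / (sqrt pi * \<sigma>)) *
     (\<Sum>v\<in>gh_nodes M. gh_weight M v * F (x + (sqrt 2 * \<sigma> * v) *\<^sub>R \<xi>) * (sqrt 2 * v))"

definition dgs_grad :: "nat \<Rightarrow> real \<Rightarrow> (nat \<Rightarrow> 'a::euclidean_space) \<Rightarrow> ('a \<Rightarrow> real) \<Rightarrow> 'a \<Rightarrow> 'a" where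
  "dgs_grad M \<sigma> \<Xi> F x = (\<Sum>i<DIM('a). gh_deriv_est M \<sigma> F x (\<Xi> i) *\<^sub>R \<Xi> i)"

end

theory Submission
  imports Defs
begin

text \<open>
  Along each direction \<open>\<xi>\<close>, write \<open>F (x + \<sigma> v \<xi>) = F x + \<sigma> v (\<nabla>F x \<bullet> \<xi>) + R v\<close> with
  \<open>|R v| \<le> L \<sigma>\<^sup>2 v\<^sup>2\<close>. Integrated against \<open>\<phi>(v) v\<close> with \<open>\<phi>\<close> the standard normal
  density, the constant term vanishes and the linear term returns \<open>\<nabla>F x \<bullet> \<xi>\<close> exactly, so the smoothed derivative differs from the
  directional derivative by at most \<open>L \<sigma> E|v|\<^sup>3 \<le> L \<sigma> (E v\<^sup>2 + E v\<^sup>4) = 4 L \<sigma>\<close>.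
  Adding the assumed quadrature error and using \<open>(a + b)\<^sup>2 \<le> 2a\<^sup>2 + 2b\<^sup>2\<close> bounds each
  coordinate of the error in the orthonormal basis, and Parseval sums the \<open>d\<close> coordinates.
\<close>

lemma first_order_remainder_le:
  fixes F :: "'a::euclidean_space \<Rightarrow> real"
  assumes grad: "\<And>y. (F has_derivative (\<lambda>h. gradF y \<bullet> h)) (at y)"
    and lip: "\<And>y \<eta>. norm (gradF (y + \<eta>) - gradF y) \<le> L * norm \<eta>"
    and L: "L \<ge> 0"
  shows "\<bar>F (x + h) - F x - gradF x \<bullet> h\<bar> \<le> L * (norm h)\<^sup>2"
proof -
  define \<phi> where "\<phi> t = F (x + t *\<^sub>R h) - t * (gradF x \<bullet> h)" for t
  have D: "DERIV \<phi> t :> (gradF (x + t *\<^sub>R h) \<bullet> h - gradF x \<bullet> h)" for t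
  proof -
    have line: "((\<lambda>t. x + t *\<^sub>R h) has_derivative (\<lambda>s. s *\<^sub>R h)) (at t)"
      by (auto intro!: derivative_eq_intros)
    have "((\<lambda>t. F (x + t *\<^sub>R h)) has_derivative (\<lambda>s. gradF (x + t *\<^sub>R h) \<bullet> (s *\<^sub>R h))) (at t)"
      using has_derivative_compose[OF line grad] .
    moreover have "(\<lambda>s. gradF (x + t *\<^sub>R h) \<bullet> (s *\<^sub>R h)) = (*) (gradF (x + t *\<^sub>R h) \<bullet> h)"
      by (rule ext) simp
    ultimately have "((\<lambda>t. F (x + t *\<^sub>R h)) has_field_derivative (gradF (x + t *\<^sub>R h) \<bullet> h)) (at t)"
      unfolding has_field_derivative_def by simp
    then show ?thesis
      unfolding \<phi>_def by (auto intro!: derivative_eq_intros)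
  qed
  obtain z where z: "0 < z" "z < 1"
    and mvt: "\<phi> 1 - \<phi> 0 = (1 - 0) * (gradF (x + z *\<^sub>R h) \<bullet> h - gradF x \<bullet> h)"
    using MVT2[of 0 1 \<phi>, OF _ D] by auto
  have "\<bar>F (x + h) - F x - gradF x \<bullet> h\<bar> = \<bar>(gradF (x + z *\<^sub>R h) - gradF x) \<bullet> h\<bar>"
    using mvt by (simp add: \<phi>_def inner_diff_left)
  also have "\<dots> \<le> norm (gradF (x + z *\<^sub>R h) - gradF x) * norm h"
    using Cauchy_Schwarz_ineq2 by blast
  also have "\<dots> \<le> (L * norm (z *\<^sub>R h)) * norm h"
    by (intro mult_right_mono lip) auto
  also have "\<dots> \<le> L * (norm h)\<^sup>2"
    using z L by (simp add: power2_eq_square mult_left_le_one_le mult.assoc mult_left_mono)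
  finally show ?thesis .
qed

lemma abs_power3_le_power2_plus_power4: "\<bar>v::real\<bar> ^ 3 \<le> v ^ 2 + v ^ 4"
proof (cases "\<bar>v\<bar> \<le> 1")
  case True
  have "\<bar>v\<bar> ^ 3 = \<bar>v\<bar> * \<bar>v\<bar> ^ 2" by (simp add: power_def)
  also have "\<dots> \<le> v ^ 2" using True by (simp add: mult_left_le_one_le)
  finally show ?thesis by (simp add: add_increasing2)
next
  case False
  have "\<bar>v\<bar> ^ 3 \<le> \<bar>v\<bar> ^ 3 * \<bar>v\<bar>" using False by (simp add: mult_le_cancel_left1)
  also have "\<dots> = v ^ 4" by (simp add: power_def power_abs[symmetric] numeral_eq_Suc)
  finally show ?thesis by (simp add: add_increasing)
qed

lemma
  fixes R :: "real \<Rightarrow> real"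
  assumes cont: "continuous_on UNIV R"
    and quadratic: "\<And>v. \<bar>R v\<bar> \<le> K * v\<^sup>2"
  shows integrable_std_normal_quadratic_remainder:
      "integrable lborel (\<lambda>v. std_normal_density v * (R v * v))"
    and integral_std_normal_quadratic_remainder_le:
      "\<bar>LINT v|lborel. std_normal_density v * (R v * v)\<bar> \<le> 4 * K"
proof -
  let ?\<phi> = std_normal_density
  let ?bound = "\<lambda>v. K * (?\<phi> v * v ^ 2) + K * (?\<phi> v * v ^ 4)"
  have K: "K \<ge> 0" using quadratic[of 1] by simp
  have bound_integrable: "integrable lborel ?bound"
    by (intro Bochner_Integration.integrable_add integrable_mult_right integrable_std_normal_moment)
  have pointwise: "\<bar>?\<phi> v * (R v * v)\<bar> \<le> ?bound v" for v
  proof -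
    have "\<bar>?\<phi> v * (R v * v)\<bar> = ?\<phi> v * (\<bar>R v\<bar> * \<bar>v\<bar>)" by (simp add: abs_mult)
    also have "\<dots> \<le> ?\<phi> v * (K * v\<^sup>2 * \<bar>v\<bar>)"
      using quadratic[of v] by (intro mult_left_mono mult_right_mono) auto
    also have "\<dots> = K * (?\<phi> v * \<bar>v\<bar> ^ 3)" by (simp add: power_def numeral_eq_Suc)
    also have "\<dots> \<le> K * (?\<phi> v * (v ^ 2 + v ^ 4))"
      using K abs_power3_le_power2_plus_power4[of v] by (intro mult_left_mono) auto
    finally show ?thesis by (simp add: algebra_simps)
  qed
  have "(\<lambda>v. ?\<phi> v * (R v * v)) \<in> borel_measurable borel"
    unfolding std_normal_density_def
    by (intro borel_measurable_continuous_onI continuous_intros cont) auto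
  then show integrable: "integrable lborel (\<lambda>v. ?\<phi> v * (R v * v))"
    by (intro Bochner_Integration.integrable_bound[OF bound_integrable])
       (auto intro!: order_trans[OF pointwise])
  have "\<bar>LINT v|lborel. ?\<phi> v * (R v * v)\<bar> \<le> (LINT v|lborel. ?bound v)"
    by (rule integral_abs_bound_integral[OF integrable bound_integrable pointwise])
  also have "\<dots> = K * (LINT v|lborel. ?\<phi> v * v ^ 2) + K * (LINT v|lborel. ?\<phi> v * v ^ 4)"
    using integrable_std_normal_moment[of 2] integrable_std_normal_moment[of 4] by simp
  also have "\<dots> = 4 * K"
    using integral_std_normal_moment_even[of 1] integral_std_normal_moment_even[of 2]
    by (simp add: fact_numeral)
  finally show "\<bar>LINT v|lborel. ?\<phi> v * (R v * v)\<bar> \<le> 4 * K" .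
qed

lemma gs_deriv_minus_directional_derivative_le:
  fixes F :: "'a::euclidean_space \<Rightarrow> real"
  assumes grad: "\<And>y. (F has_derivative (\<lambda>h. gradF y \<bullet> h)) (at y)"
    and lip: "\<And>y \<eta>. norm (gradF (y + \<eta>) - gradF y) \<le> L * norm \<eta>"
    and L: "L \<ge> 0" and unit: "norm \<xi> = 1" and \<sigma>: "\<sigma> > 0"
  shows "\<bar>gs_deriv \<sigma> F x \<xi> - gradF x \<bullet> \<xi>\<bar> \<le> 4 * L * \<sigma>"
proof -
  let ?\<phi> = std_normal_density
  define c where "c = gradF x \<bullet> \<xi>"
  define g where "g v = F (x + (\<sigma> * v) *\<^sub>R \<xi>)" for v
  define R where "R v = g v - F x - \<sigma> * v * c" for v
  have R_le: "\<bar>R v\<bar> \<le> (L * \<sigma>\<^sup>2) * v\<^sup>2" for v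
  proof -
    have "\<bar>R v\<bar> \<le> L * (norm ((\<sigma> * v) *\<^sub>R \<xi>))\<^sup>2"
      using first_order_remainder_le[OF grad lip L, of x "(\<sigma> * v) *\<^sub>R \<xi>"]
      by (simp add: R_def g_def c_def mult.assoc)
    also have "\<dots> = (L * \<sigma>\<^sup>2) * v\<^sup>2" using unit by (simp add: power_mult_distrib)
    finally show ?thesis .
  qed
  have "continuous_on UNIV F"
    using grad by (meson continuous_on_eq_continuous_at has_derivative_continuous open_UNIV)
  then have "continuous_on UNIV g"
    unfolding g_def by (rule continuous_on_compose2) (auto intro!: continuous_intros)
  then have R_cont: "continuous_on UNIV R"
    unfolding R_def by (intro continuous_intros)
  have split: "?\<phi> v * (g v * v) = F x * (?\<phi> v * v) + \<sigma> * c * (?\<phi> v * v ^ 2) + ?\<phi> v * (R v * v)"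
    for v
    by (simp add: R_def algebra_simps power2_eq_square)
  have "(LINT v|lborel. ?\<phi> v * (g v * v)) = \<sigma> * c + (LINT v|lborel. ?\<phi> v * (R v * v))"
    unfolding split
    using integrable_std_normal_moment[of 1] integrable_std_normal_moment[of 2]
      integrable_std_normal_quadratic_remainder[OF R_cont R_le]
      integral_std_normal_moment_odd[of 0] integral_std_normal_moment_even[of 1]
    by (simp add: Bochner_Integration.integral_add)
  then have "gs_deriv \<sigma> F x \<xi> - c = (LINT v|lborel. ?\<phi> v * (R v * v)) / \<sigma>"
    unfolding gs_deriv_def g_def using \<sigma> by (simp add: field_simps)
  then have "\<bar>gs_deriv \<sigma> F x \<xi> - c\<bar> \<le> 4 * (L * \<sigma>\<^sup>2) / \<sigma>"
    using integral_std_normal_quadratic_remainder_le[OF R_cont R_le] \<sigma>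
    by (simp add: divide_right_mono)
  also have "\<dots> = 4 * L * \<sigma>" using \<sigma> by (simp add: power2_eq_square)
  finally show ?thesis by (simp add: c_def)
qed

lemma norm_sum_orthonormal_power2:
  fixes \<Xi> :: "nat \<Rightarrow> 'a::real_inner"
  assumes orth: "\<And>i j. i < n \<Longrightarrow> j < n \<Longrightarrow> \<Xi> i \<bullet> \<Xi> j = (if i = j then 1 else 0)"
  shows "(norm (\<Sum>i<n. e i *\<^sub>R \<Xi> i))\<^sup>2 = (\<Sum>i<n. (e i)\<^sup>2)"
proof -
  have "(norm (\<Sum>i<n. e i *\<^sub>R \<Xi> i))\<^sup>2 = (\<Sum>i<n. \<Sum>j<n. e i * e j * (\<Xi> j \<bullet> \<Xi> i))"
    by (simp add: power2_norm_eq_inner inner_sum_left inner_sum_right sum_distrib_left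
        mult.assoc mult.left_commute)
  also have "\<dots> = (\<Sum>i<n. \<Sum>j<n. if i = j then e i * e j else 0)"
    by (intro sum.cong refl) (simp add: orth)
  also have "\<dots> = (\<Sum>i<n. (e i)\<^sup>2)" by (simp add: power2_eq_square)
  finally show ?thesis .
qed

lemma orthonormal_basis_expansion:
  fixes \<Xi> :: "nat \<Rightarrow> 'a::euclidean_space"
  assumes orth: "\<And>i j. i < DIM('a) \<Longrightarrow> j < DIM('a) \<Longrightarrow> \<Xi> i \<bullet> \<Xi> j = (if i = j then 1 else 0)"
  shows "(\<Sum>i<DIM('a). (w \<bullet> \<Xi> i) *\<^sub>R \<Xi> i) = w"
proof -
  define B where "B = \<Xi> ` {..<DIM('a)}"
  have inj: "inj_on \<Xi> {..<DIM('a)}"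
  proof (rule inj_onI)
    fix i j assume "i \<in> {..<DIM('a)}" "j \<in> {..<DIM('a)}" "\<Xi> i = \<Xi> j"
    then show "i = j" using orth[of i j] orth[of i i] by (auto split: if_splits)
  qed
  have orthogonal: "pairwise orthogonal B"
    unfolding B_def pairwise_def orthogonal_def using orth by auto
  have unit: "norm b = 1" if "b \<in> B" for b
    using that orth unfolding B_def by (auto simp: norm_eq_sqrt_inner)
  then have "independent B"
    using pairwise_orthogonal_independent[OF orthogonal] by force
  moreover have "card B = dim (UNIV :: 'a set)"
    unfolding B_def using card_image[OF inj] by simp
  ultimately have "w \<in> span B"
    using card_eq_dim[of B UNIV] by (auto simp: B_def)
  then have "(\<Sum>b\<in>B. (w \<bullet> b) *\<^sub>R b) = w"
    using orthonormal_basis_expand[OF orthogonal unit] by (simp add: B_def)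
  then show ?thesis unfolding B_def by (simp add: sum.reindex[OF inj])
qed

lemma dgs_grad_minus_eq_sum:
  fixes \<Xi> :: "nat \<Rightarrow> 'a::euclidean_space"
  assumes orth: "\<And>i j. i < DIM('a) \<Longrightarrow> j < DIM('a) \<Longrightarrow> \<Xi> i \<bullet> \<Xi> j = (if i = j then 1 else 0)"
  shows "dgs_grad M \<sigma> \<Xi> F x - w
    = (\<Sum>i<DIM('a). (gh_deriv_est M \<sigma> F x (\<Xi> i) - w \<bullet> \<Xi> i) *\<^sub>R \<Xi> i)"
  using orthonormal_basis_expansion[OF orth, of w]
  by (simp add: dgs_grad_def sum_subtractf scaleR_diff_left)

lemma power2_add_le: "((a::real) + b)\<^sup>2 \<le> 2 * a\<^sup>2 + 2 * b\<^sup>2"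
proof -
  have "0 \<le> (a - b)\<^sup>2" by simp
  then show ?thesis by (simp add: power2_eq_square algebra_simps)
qed

theorem proposition1:
  fixes F :: "'a::euclidean_space \<Rightarrow> real"
    and gradF :: "'a \<Rightarrow> 'a"
    and \<Xi> :: "nat \<Rightarrow> 'a"
    and L \<sigma> C :: real and M :: nat and x :: 'a
  assumes grad: "\<And>y. (F has_derivative (\<lambda>h. gradF y \<bullet> h)) (at y)"
    and lip: "\<And>y \<eta>. norm (gradF (y + \<eta>) - gradF y) \<le> L * norm \<eta>"
    and L_pos: "L > 0"
    and orthonormal: "\<And>i j. i < DIM('a) \<Longrightarrow> j < DIM('a) \<Longrightarrow> \<Xi> i \<bullet> \<Xi> j = (if i = j then 1 else 0)"
    and sigma_pos: "\<sigma> > 0"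
    and M_ge: "M \<ge> 1"
    and C_pos: "C > 0"
    and quad_err: "\<And>i. i < DIM('a) \<Longrightarrow>
        \<bar>gh_deriv_est M \<sigma> F x (\<Xi> i) - gs_deriv \<sigma> F x (\<Xi> i)\<bar>
          \<le> C * (fact M * sqrt pi / (2 ^ M * fact (2 * M))) * \<sigma> ^ (2 * M - 1)"
  shows "(norm (dgs_grad M \<sigma> \<Xi> F x - gradF x))\<^sup>2
           \<le> 2 * C\<^sup>2 * pi * real DIM('a) * (fact M)\<^sup>2 / (4 ^ M * (fact (2 * M))\<^sup>2) * \<sigma> ^ (4 * M - 2)
             + 32 * real DIM('a) * L\<^sup>2 * \<sigma>\<^sup>2"
proof -
  define a where "a = C * (fact M * sqrt pi / (2 ^ M * fact (2 * M))) * \<sigma> ^ (2 * M - 1)"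
  define e where "e i = gh_deriv_est M \<sigma> F x (\<Xi> i) - gradF x \<bullet> \<Xi> i" for i
  have e_le: "(e i)\<^sup>2 \<le> 2 * a\<^sup>2 + 2 * (4 * L * \<sigma>)\<^sup>2" if i: "i < DIM('a)" for i
  proof -
    have "norm (\<Xi> i) = 1" using orthonormal[OF i i] by (simp add: norm_eq_sqrt_inner)
    then have "\<bar>gs_deriv \<sigma> F x (\<Xi> i) - gradF x \<bullet> \<Xi> i\<bar> \<le> 4 * L * \<sigma>"
      using gs_deriv_minus_directional_derivative_le[OF grad lip] L_pos sigma_pos by simp
    then have "\<bar>e i\<bar> \<le> a + 4 * L * \<sigma>"
      using quad_err[OF i] unfolding a_def e_def by linarith
    then have "(e i)\<^sup>2 \<le> (a + 4 * L * \<sigma>)\<^sup>2"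
      by (metis abs_ge_zero order.trans power2_le_iff_abs_le)
    then show ?thesis using power2_add_le[of a "4 * L * \<sigma>"] by linarith
  qed
  have "(\<sigma> ^ (2 * M - 1))\<^sup>2 = \<sigma> ^ (4 * M - 2)"
    using M_ge by (simp flip: power_mult add: diff_mult_distrib)
  moreover have "(4::real) ^ M = (2 ^ M)\<^sup>2"
    unfolding power_even_eq[symmetric] power_mult by simp
  ultimately have quadrature_term: "real DIM('a) * (2 * a\<^sup>2)
      = 2 * C\<^sup>2 * pi * real DIM('a) * (fact M)\<^sup>2 / (4 ^ M * (fact (2 * M))\<^sup>2) * \<sigma> ^ (4 * M - 2)"
    unfolding a_def by (simp add: power_mult_distrib power_divide)
  have "(norm (dgs_grad M \<sigma> \<Xi> F x - gradF x))\<^sup>2 = (\<Sum>i<DIM('a). (e i)\<^sup>2)"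
    using norm_sum_orthonormal_power2[OF orthonormal, where e = e]
    by (simp add: dgs_grad_minus_eq_sum[OF orthonormal] e_def)
  also have "\<dots> \<le> real DIM('a) * (2 * a\<^sup>2) + 32 * real DIM('a) * L\<^sup>2 * \<sigma>\<^sup>2"
    using sum_mono[of "{..<DIM('a)}", OF e_le]
    by (simp add: algebra_simps power2_eq_square)
  finally show ?thesis by (simp only: quadrature_term)
qed

end
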